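(* The topological group $\pi_{1}(HA,(0,0))$ has exactly one nonempty open subset (i.e., it carries the indiscrete topology).
   Context: For $n\geq1$ let $X_{n}\subset\mathbb{R}^{2}$ be the circle of radius $\frac1n$ centered at $(\frac1n,0)$ and $Y_{1}=\bigcup_{i\geq1}X_{i}$ (the Hawaiian earring). Let $A_{n}\subset\mathbb{R}^2$ be the closed pinched annulus bounded by $X_{n}\cup X_{n+1}$ and $Y^{n}=Y_{1}\cup A_{1}\cup\dots\cup A_{n}$ with the Euclidean subspace topology. The harmonic archipelago $HA$ has underlying set $\bigcup_{n}Y^{n}$, with a topology such that each $Y^{n}$ inherits its usual topology and: (1) there is a sequence $z_{n}\in\operatorname{int}(A_{n})$ such that $\{z_{1},z_{2},\dots\}$ has no subsequential limit, and (2) if $p\in HA$ is a subsequential limit of a sequence $(y_n)$ with $y_{n}\in\operatorname{int}(A_{n})$ for all $n$, then $p=(0,0)$. The topology on $\pi_1(HA,(0,0))$: let $L=\{f:[0,1]\to HA \mid f \text{ continuous},\ f(0)=f(1)=(0,0)\}$ with the uniform (compact-open) topology; $\pi_{1}(HA,(0,0))$ is the set of path components of $L$ with the quotient topology, which makes it a topological group. *)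

theory Defs
  imports "HOL-Analysis.Analysis"
begin

text \<open>Points of the plane are pairs of reals (Euclidean metric/topology).
  The circle X n (n \<ge> 1) has radius 1/n and centre (1/n,0).\<close>

definition hcentre :: "nat \<Rightarrow> real \<times> real" where
  "hcentre n = (1 / real n, 0)"

definition Xc :: "nat \<Rightarrow> (real \<times> real) set" where
  "Xc n = sphere (hcentre n) (1 / real n)"

definition Y1 :: "(real \<times> real) set" where
  "Y1 = (\<Union>n\<in>{1..}. Xc n)"

definition Ann :: "nat \<Rightarrow> (real \<times> real) set" where
  "Ann n = cball (hcentre n) (1 / real n) - ball (hcentre (Suc n)) (1 / real (Suc n))"

definition Yup :: "nat \<Rightarrow> (real \<times> real) set" where
  "Yup n = Y1 \<union> (\<Union>k\<in>{1..n}. Ann k)"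

definition HA :: "(real \<times> real) set" where
  "HA = (\<Union>n\<in>{1..}. Yup n)"

text \<open>Sequences are indexed from 0, the k-th term lying in int(A_(k+1)).
  "p is a subsequential limit of y" = some subsequence converges to p.\<close>
definition subseq_limit :: "'a topology \<Rightarrow> (nat \<Rightarrow> 'a) \<Rightarrow> 'a \<Rightarrow> bool" where
  "subseq_limit T y p \<longleftrightarrow> (\<exists>r. strict_mono r \<and> limitin T (y \<circ> r) p sequentially)"

definition HA_topology :: "(real \<times> real) topology \<Rightarrow> bool" where
  "HA_topology T \<longleftrightarrow>
     topspace T = HA \<and>
     (\<forall>n\<ge>1. subtopology T (Yup n) = top_of_set (Yup n)) \<and>
     (\<exists>z. (\<forall>k. z k \<in> interior (Ann (Suc k))) \<and> (\<forall>p. \<not> subseq_limit T z p)) \<and>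
     (\<forall>y p. (\<forall>k. y k \<in> interior (Ann (Suc k))) \<and> subseq_limit T y p \<longrightarrow> p = (0, 0))"

text \<open>The space L of loops [0,1] \<rightarrow> HA based at (0,0).  Loops are represented
  by functions real \<Rightarrow> real \<times> real that are extensional on [0,1].\<close>
definition loops :: "(real \<times> real) topology \<Rightarrow> (real \<Rightarrow> real \<times> real) set" where
  "loops T = {f. continuous_map (top_of_set {0..1}) T f \<and> f 0 = (0, 0) \<and> f 1 = (0, 0)
                  \<and> f \<in> extensional {0..1}}"

text \<open>Compact-open topology on L: generated by the subbasic sets
  {f \<in> L. f ` K \<subseteq> U}, K \<subseteq> [0,1] compact, U open in T (K = {} gives L itself).\<close>
definition compact_open_loops :: "(real \<times> real) topology \<Rightarrow> (real \<Rightarrow> real \<times> real) topology" where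
  "compact_open_loops T = topology_generated_by
     {{f \<in> loops T. f ` K \<subseteq> U} | K U. K \<subseteq> {0..1} \<and> compact K \<and> openin T U}"

definition quotient_topology :: "'a topology \<Rightarrow> ('a \<Rightarrow> 'b) \<Rightarrow> 'b topology" where
  "quotient_topology X q =
     topology (\<lambda>U. U \<subseteq> q ` topspace X \<and> openin X {x \<in> topspace X. q x \<in> U})"

definition pi1_top :: "(real \<times> real) topology \<Rightarrow> (real \<Rightarrow> real \<times> real) set topology" where
  "pi1_top T = quotient_topology (compact_open_loops T) (path_component_of_set (compact_open_loops T))"

end

theory Submission
  imports Defs
begin

text \<open>
  Inversion in the unit circle turns the circle \<open>X n\<close> into the line \<open>fst = n/2\<close> and the
  annuli into strips. This makes room for a deformation \<open>push_out M\<close> that moves the points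
  below the circle \<open>X M\<close> onto it and fixes everything beyond. It is a homotopy for every
  admissible topology \<open>T\<close>: away from the origin a path stays locally in some \<open>Y\<^sup>n\<close>, where
  \<open>T\<close> is Euclidean, and the deformation does not increase the norm. By condition (2) and
  compactness a loop leaves a neighbourhood \<open>V\<close> of the origin only inside some \<open>Y\<^sup>n\<close>,
  while the circles \<open>X m\<close> with large \<open>m\<close> lie in \<open>V\<close>; so for large \<open>M\<close> the pushed loop
  lies in \<open>V\<close>.

  Let \<open>A\<close> be open in the loop space, \<open>f \<in> A\<close> and \<open>g\<close> any loop. The loop \<open>g\<close> is homotopic to
  the loop running through \<open>g\<cdot>f\<^sup>-\<^sup>1\<close> during \<open>[0,e]\<close> and through \<open>f\<close> afterwards, and pushing
  the first part into \<open>V\<close> does not change the path component. Open sets of the compact-open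
  topology absorb such short prefixes near the base point (on a subbasic set because \<open>f\<close>
  keeps a uniform margin), so \<open>A\<close> meets the path component of \<open>g\<close>.
\<close>

section \<open>Inversion coordinates\<close>

definition inversion :: "real \<times> real \<Rightarrow> real \<times> real" where
  "inversion w = w /\<^sub>R (norm w)\<^sup>2"

lemma norm_inversion: "norm (inversion w) = inverse (norm w)"
  by (cases "w = 0") (simp_all add: inversion_def power2_eq_square)

lemma inversion_0 [simp]: "inversion 0 = 0"
  by (simp add: inversion_def)

lemma inversion_eq_0_iff [simp]: "inversion w = 0 \<longleftrightarrow> w = 0"
  by (simp add: inversion_def)

lemma inversion_inversion [simp]: "inversion (inversion w) = w"
  by (cases "w = 0") (simp_all add: inversion_def norm_inversion power2_eq_square field_simps)

lemma isCont_inversion: "w \<noteq> 0 \<Longrightarrow> isCont inversion w"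
  unfolding inversion_def by (intro continuous_intros) auto

text \<open>Inversion maps \<open>Xc n\<close> onto the line \<open>fst = n/2\<close>: a point other than the origin lies
  on \<open>Xc n\<close> iff its level is \<open>n\<close>, and in \<open>Ann n\<close> iff its level lies in \<open>[n, n + 1]\<close>.\<close>

definition level :: "real \<times> real \<Rightarrow> real" where
  "level z = 2 * fst (inversion z)"

lemma level_eq: "level z = 2 * fst z / (norm z)\<^sup>2"
  by (simp add: level_def inversion_def divide_inverse mult.commute)

lemma level_0 [simp]: "level 0 = 0"
  by (simp add: level_eq)

lemma dist_hcentre_sq: "(dist z (hcentre n))\<^sup>2 = (norm z)\<^sup>2 - 2 * fst z / real n + (1 / real n)\<^sup>2"
proof (cases z)
  case (Pair a b)
  have "(dist z (hcentre n))\<^sup>2 = (a - 1 / real n)\<^sup>2 + b\<^sup>2"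
    by (simp add: Pair hcentre_def dist_Pair_Pair dist_real_def)
  then show ?thesis
    by (simp add: Pair norm_Pair power2_diff diff_divide_distrib)
qed

lemma mem_cball_hcentre_iff:
  assumes "n \<ge> 1" "z \<noteq> 0"
  shows "z \<in> cball (hcentre n) (1 / real n) \<longleftrightarrow> real n \<le> level z"
proof -
  have "z \<in> cball (hcentre n) (1 / real n) \<longleftrightarrow> (dist z (hcentre n))\<^sup>2 \<le> (1 / real n)\<^sup>2"
    by (simp add: dist_commute power_mono_iff)
  also have "\<dots> \<longleftrightarrow> real n \<le> level z"
    using assms by (simp add: dist_hcentre_sq level_eq field_simps)
  finally show ?thesis .
qed

lemma mem_ball_hcentre_iff:
  assumes "n \<ge> 1" "z \<noteq> 0"
  shows "z \<in> ball (hcentre n) (1 / real n) \<longleftrightarrow> real n < level z"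
proof -
  have "z \<in> ball (hcentre n) (1 / real n) \<longleftrightarrow> (dist z (hcentre n))\<^sup>2 < (1 / real n)\<^sup>2"
    using power_mono_iff[of "1 / real n" "dist z (hcentre n)" 2]
    by (simp add: dist_commute not_le[symmetric] del: power_mono_iff)
  also have "\<dots> \<longleftrightarrow> real n < level z"
    using assms by (simp add: dist_hcentre_sq level_eq field_simps)
  finally show ?thesis .
qed

lemma mem_Xc_iff:
  assumes "n \<ge> 1" "z \<noteq> 0"
  shows "z \<in> Xc n \<longleftrightarrow> level z = real n"
  using mem_cball_hcentre_iff[OF assms] mem_ball_hcentre_iff[OF assms]
  by (auto simp: Xc_def dist_commute)

lemma origin_in_discs:
  "0 \<in> Xc n" "0 \<in> cball (hcentre n) (1 / real n)" "0 \<notin> ball (hcentre n) (1 / real n)"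
  by (auto simp: Xc_def hcentre_def dist_Pair_Pair zero_prod_def)

lemma mem_Y1_iff: "z \<in> Y1 \<longleftrightarrow> z = 0 \<or> (\<exists>m\<ge>1. level z = real m)"
proof (cases "z = 0")
  case True
  then show ?thesis using origin_in_discs(1)[of 1] by (auto simp: Y1_def)
next
  case False
  then show ?thesis using mem_Xc_iff[OF _ False] by (simp add: Y1_def) blast
qed

lemma mem_Ann_iff:
  assumes "k \<ge> 1"
  shows "z \<in> Ann k \<longleftrightarrow> z = 0 \<or> real k \<le> level z \<and> level z \<le> real k + 1"
proof (cases "z = 0")
  case True
  then show ?thesis using origin_in_discs(2)[of k] origin_in_discs(3)[of "Suc k"] by (simp add: Ann_def)
next
  case False
  then show ?thesis
    using mem_cball_hcentre_iff[OF assms False] mem_ball_hcentre_iff[of "Suc k", OF _ False]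
    by (auto simp: Ann_def)
qed

lemma mem_UN_Ann_iff: "z \<in> (\<Union>k\<in>{1..n}. Ann k) \<longleftrightarrow> n \<ge> 1 \<and> (z = 0 \<or> 1 \<le> level z \<and> level z \<le> real n + 1)"
proof
  assume "z \<in> (\<Union>k\<in>{1..n}. Ann k)"
  then show "n \<ge> 1 \<and> (z = 0 \<or> 1 \<le> level z \<and> level z \<le> real n + 1)"
    using mem_Ann_iff[of _ z] by (auto simp del: of_nat_add)
next
  assume z: "n \<ge> 1 \<and> (z = 0 \<or> 1 \<le> level z \<and> level z \<le> real n + 1)"
  define k where "k = min n (nat \<lfloor>level z\<rfloor>)"
  have "z \<in> Ann (max 1 k)"
    using z by (auto simp: mem_Ann_iff k_def min_def) linarith+
  moreover have "max 1 k \<in> {1..n}"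
    using z by (auto simp: k_def)
  ultimately show "z \<in> (\<Union>k\<in>{1..n}. Ann k)" by blast
qed

lemma mem_Yup_iff:
  "z \<in> Yup n \<longleftrightarrow> z = 0 \<or> (\<exists>m\<ge>1. level z = real m) \<or> n \<ge> 1 \<and> 1 \<le> level z \<and> level z \<le> real n + 1"
  unfolding Yup_def Un_iff mem_Y1_iff mem_UN_Ann_iff by auto

lemma mem_HA_iff: "z \<in> HA \<longleftrightarrow> z = 0 \<or> 1 \<le> level z"
proof
  assume "z \<in> HA"
  then show "z = 0 \<or> 1 \<le> level z"
    by (auto simp: HA_def mem_Yup_iff)
next
  assume z: "z = 0 \<or> 1 \<le> level z"
  define n where "n = Suc (nat \<lceil>level z\<rceil>)"
  have "level z \<le> real n + 1" "n \<ge> 1"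
    unfolding n_def by linarith+
  then show "z \<in> HA"
    using z unfolding HA_def by (auto simp: mem_Yup_iff intro!: bexI[of _ n])
qed

lemma Yup_mono: "m \<le> n \<Longrightarrow> Yup m \<subseteq> Yup n"
  unfolding Yup_def by auto

lemma Yup_subset_HA: "Yup n \<subseteq> HA"
  by (simp add: subset_iff mem_Yup_iff mem_HA_iff) linarith

lemma origin_in_Yup: "0 \<in> Yup n"
  by (simp add: mem_Yup_iff)

lemma origin_in_HA: "0 \<in> HA"
  by (simp add: mem_HA_iff)

lemma Xc_subset_Yup: "m \<ge> 1 \<Longrightarrow> Xc m \<subseteq> Yup n"
  unfolding Yup_def Y1_def by auto

lemma norm_le_of_mem_Xc: "z \<in> Xc m \<Longrightarrow> norm z \<le> 2 / real m"
  using norm_triangle_ineq2[of z "hcentre m"]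
  by (simp add: Xc_def hcentre_def dist_norm norm_Pair norm_minus_commute)

definition open_annulus :: "nat \<Rightarrow> (real \<times> real) set" where
  "open_annulus k = ball (hcentre k) (1 / real k) - cball (hcentre (Suc k)) (1 / real (Suc k))"

lemma open_open_annulus: "open (open_annulus k)"
  by (simp add: open_annulus_def open_Diff)

lemma mem_open_annulus_iff:
  assumes "k \<ge> 1"
  shows "z \<in> open_annulus k \<longleftrightarrow> z \<noteq> 0 \<and> real k < level z \<and> level z < real k + 1"
proof (cases "z = 0")
  case True
  then show ?thesis using origin_in_discs(3)[of k] by (simp add: open_annulus_def)
next
  case False
  then show ?thesis
    using mem_ball_hcentre_iff[OF assms False] mem_cball_hcentre_iff[of "Suc k", OF _ False]
    by (auto simp: open_annulus_def)
qed

lemma open_annulus_subset_interior: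
  assumes "k \<ge> 1"
  shows "open_annulus k \<subseteq> interior (Ann k)"
proof (rule interior_maximal)
  show "open_annulus k \<subseteq> Ann k"
    using assms by (simp add: subset_iff mem_open_annulus_iff mem_Ann_iff)
qed (auto simp: open_annulus_def)

lemma open_annulus_disjoint_Yup:
  assumes "n < k"
  shows "open_annulus k \<inter> Yup n = {}"
proof -
  have "\<not> (real k < real m \<and> real m < real k + 1)" for m
    using of_nat_less_iff[of k m] of_nat_less_iff[of m "k + 1"] by auto
  then show ?thesis
    using assms by (auto simp: mem_open_annulus_iff mem_Yup_iff)
qed

definition annulus_index :: "real \<times> real \<Rightarrow> nat" where
  "annulus_index z = nat \<lfloor>level z\<rfloor>"

lemma annulus_index_outside_Yup:
  assumes "z \<in> HA" "z \<notin> Yup n"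
  shows "n < annulus_index z" "z \<in> open_annulus (annulus_index z)"
proof -
  have z: "z \<noteq> 0" "1 \<le> level z"
    using assms origin_in_Yup by (auto simp: mem_HA_iff)
  then have k: "annulus_index z \<ge> 1" "real (annulus_index z) \<le> level z"
      "level z < real (annulus_index z) + 1"
    unfolding annulus_index_def by linarith+
  moreover have "level z \<noteq> real (annulus_index z)" "real n + 1 < level z"
    using assms(2) z k(1) by (auto simp: mem_Yup_iff)
  ultimately show "n < annulus_index z" "z \<in> open_annulus (annulus_index z)"
    using z by (simp_all add: mem_open_annulus_iff)
qed

lemma mem_Xc_beyond_annuli:
  assumes "z \<in> Yup n" "z \<noteq> 0" "real n + 1 \<le> level z"
  obtains m where "level z = real m" "z \<in> Xc m"
proof -
  have "\<exists>m\<ge>1. level z = real m"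
  proof (cases "\<exists>m\<ge>1. level z = real m")
    case False
    then have "level z = real (n + 1)"
      using assms by (auto simp: mem_Yup_iff)
    then show ?thesis
      by (intro exI[of _ "n + 1"]) simp
  qed
  then show ?thesis
    using assms(2) mem_Xc_iff that by blast
qed

section \<open>Pushing annuli onto a circle\<close>

text \<open>In inverted coordinates, points of level below \<open>M\<close> move linearly in \<open>s\<close> onto the
  circle \<open>Xc M\<close>; points of level at least \<open>M\<close> stay fixed.\<close>

definition push_out :: "nat \<Rightarrow> real \<Rightarrow> real \<times> real \<Rightarrow> real \<times> real" where
  "push_out M s z = (if z = 0 then 0 else
     inversion (max (fst (inversion z)) ((1 - s) * fst (inversion z) + s * real M / 2),
                snd (inversion z)))"

lemma push_out_origin [simp]: "push_out M s 0 = 0"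
  by (simp add: push_out_def)

lemma push_out_start [simp]: "push_out M 0 z = z"
  by (simp add: push_out_def)

lemma level_push_out:
  assumes "0 < level z"
  shows "push_out M s z \<noteq> 0" "level (push_out M s z) = max (level z) ((1 - s) * level z + s * real M)"
proof -
  have z: "z \<noteq> 0" "0 < fst (inversion z)"
    using assms by (auto simp: level_def)
  define p where "p = (max (fst (inversion z)) ((1 - s) * fst (inversion z) + s * real M / 2), snd (inversion z))"
  have "p \<noteq> 0"
    using z(2) by (auto simp: p_def zero_prod_def)
  moreover have "push_out M s z = inversion p"
    using z(1) by (simp add: push_out_def p_def)
  ultimately show "push_out M s z \<noteq> 0" "level (push_out M s z) = max (level z) ((1 - s) * level z + s * real M)"
    by (simp_all add: level_def p_def max_def field_simps)
qed

lemma push_out_fixed: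
  assumes "z = 0 \<or> real M \<le> level z" "0 \<le> s"
  shows "push_out M s z = z"
proof (cases "z = 0")
  case False
  then have "(1 - s) * fst (inversion z) + s * real M / 2 \<le> fst (inversion z)"
    using assms mult_left_mono[of "real M / 2" "fst (inversion z)" s]
    by (simp add: level_def algebra_simps)
  then show ?thesis
    using False by (simp add: push_out_def max_absorb1)
qed simp

lemma norm_push_out_le:
  assumes "0 \<le> level z"
  shows "norm (push_out M s z) \<le> norm z"
proof (cases "z = 0")
  case False
  obtain a b where ab: "inversion z = (a, b)"
    by (cases "inversion z")
  define p where "p = (max a ((1 - s) * a + s * real M / 2), b)"
  have "0 \<le> a"
    using assms ab by (simp add: level_def)
  then have "a\<^sup>2 \<le> (max a ((1 - s) * a + s * real M / 2))\<^sup>2"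
    by (intro power_mono) auto
  then have le: "norm (inversion z) \<le> norm p"
    by (simp add: ab p_def norm_Pair)
  have "norm (push_out M s z) = inverse (norm p)"
    using False ab by (simp add: push_out_def p_def norm_inversion)
  also have "\<dots> \<le> inverse (norm (inversion z))"
    using le False by (intro le_imp_inverse_le) (simp_all add: norm_inversion)
  also have "\<dots> = norm z"
    by (simp add: norm_inversion)
  finally show ?thesis .
qed simp

lemma push_out_mem_Yup:
  assumes "z \<in> Yup n" "0 \<le> s" "s \<le> 1" "M \<ge> 1"
  shows "push_out M s z \<in> Yup (max n M)"
proof (cases "z = 0 \<or> real M \<le> level z")
  case True
  then show ?thesis
    using assms push_out_fixed Yup_mono[of n "max n M"] by auto
next
  case False
  then have z: "1 \<le> level z" "level z < real M"
    using assms(1) by (auto simp: mem_Yup_iff)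
  have "level z \<le> (1 - s) * level z + s * real M" "(1 - s) * level z + s * real M \<le> real M"
    using z assms(2,3) mult_left_mono[of "level z" "real M" s] mult_left_mono[of "level z" "real M" "1 - s"]
    by (simp_all add: algebra_simps)
  then have "push_out M s z \<in> Yup M"
    using z assms(4) level_push_out[of z M s] by (simp add: mem_Yup_iff)
  then show ?thesis
    using Yup_mono[of M "max n M"] by auto
qed

lemma push_out_mem_HA:
  assumes "z \<in> HA" "0 \<le> s" "s \<le> 1" "M \<ge> 1"
  shows "push_out M s z \<in> HA"
proof -
  obtain n where "z \<in> Yup n"
    using assms(1) by (auto simp: HA_def)
  then show ?thesis
    using assms(2-4) push_out_mem_Yup Yup_subset_HA by blast
qed

lemma push_out_onto_Xc:
  assumes "0 < level z" "level z \<le> real M" "M \<ge> 1"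
  shows "push_out M 1 z \<in> Xc M"
  using assms level_push_out[OF assms(1), of M 1] by (simp add: mem_Xc_iff)

lemma isCont_push_out:
  assumes "0 < level z"
  shows "isCont (\<lambda>p. push_out M (fst p) (snd p)) (s, z)"
proof -
  define h where "h q = (max (fst (inversion (snd q))) ((1 - fst q) * fst (inversion (snd q)) + fst q * real M / 2),
      snd (inversion (snd q)))" for q :: "real \<times> real \<times> real"
  have z: "z \<noteq> 0"
    using assms by auto
  have "isCont (\<lambda>q. inversion (snd q)) (s, z)"
    using isCont_o2[where f=snd and a="(s, z)" and g=inversion] isCont_inversion[OF z] by (simp add: isCont_snd)
  then have "isCont h (s, z)"
    unfolding h_def by (intro continuous_intros) auto
  moreover have "h (s, z) \<noteq> 0"
    using assms by (auto simp: h_def level_def zero_prod_def)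
  ultimately have "isCont (\<lambda>q. inversion (h q)) (s, z)"
    using isCont_o2[where f=h and a="(s, z)" and g=inversion] isCont_inversion by blast
  then show ?thesis
  proof (rule continuous_transform_within[where \<delta> = "norm z"])
    fix q assume "dist q (s, z) < norm z"
    then have "snd q \<noteq> 0"
      using dist_snd_le[of q "(s, z)"] by (auto simp: dist_norm)
    then show "inversion (h q) = push_out M (fst q) (snd q)"
      by (simp add: h_def push_out_def)
  qed (use z in auto)
qed

lemma continuous_on_push_out: "continuous_on (UNIV \<times> HA) (\<lambda>p. push_out M (fst p) (snd p))"
  unfolding continuous_on_eq_continuous_within
proof (intro ballI)
  fix p :: "real \<times> real \<times> real"
  assume p: "p \<in> UNIV \<times> HA"
  show "continuous (at p within UNIV \<times> HA) (\<lambda>p. push_out M (fst p) (snd p))"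
  proof (cases "snd p = 0")
    case True
    show ?thesis
      unfolding continuous_within_eps_delta
    proof (intro allI impI exI conjI ballI)
      fix e :: real and q
      assume "0 < e" "q \<in> UNIV \<times> HA" "dist q p < e"
      then have "norm (push_out M (fst q) (snd q)) \<le> norm (snd q)"
        by (intro norm_push_out_le) (auto simp: mem_HA_iff)
      also have "\<dots> \<le> dist q p"
        using dist_snd_le[of q p] True by (simp add: dist_norm)
      finally show "dist (push_out M (fst q) (snd q)) (push_out M (fst p) (snd p)) < e"
        using \<open>dist q p < e\<close> True by (simp add: dist_norm)
    qed
  next
    case False
    obtain s z where "p = (s, z)"
      by (cases p)
    moreover have "0 < level z"
      using False p calculation by (auto simp: mem_HA_iff)
    ultimately show ?thesis
      using isCont_push_out continuous_at_imp_continuous_within by blast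
  qed
qed

section \<open>Based loops in the compact-open topology\<close>

lemma continuous_map_compose_continuous_on:
  assumes "continuous_map (top_of_set B) X g" "continuous_on A f" "f ` A \<subseteq> B"
  shows "continuous_map (top_of_set A) X (\<lambda>x. g (f x))"
  using continuous_map_compose[of "top_of_set A" "top_of_set B" f X g] assms
  by (simp add: continuous_map_subtopology_eu o_def image_subset_iff_funcset)

lemma continuous_map_cases_le_on:
  fixes h :: "'a::topological_space \<Rightarrow> real"
  assumes "continuous_map (top_of_set {x\<in>A. h x \<le> c}) X f"
    and "continuous_map (top_of_set {x\<in>A. c \<le> h x}) X g"
    and "continuous_on A h" and "\<And>x. x \<in> A \<Longrightarrow> h x = c \<Longrightarrow> f x = g x"
  shows "continuous_map (top_of_set A) X (\<lambda>x. if h x \<le> c then f x else g x)"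
  using assms
  by (intro continuous_map_cases_le) (simp_all add: subtopology_subtopology Int_def conj_commute)

lemma restrict_in_loops:
  assumes "continuous_map (top_of_set {0..1}) X f" "f 0 = 0" "f 1 = 0"
  shows "restrict f {0..1} \<in> loops X"
proof -
  have "continuous_map (top_of_set {0..1}) X (restrict f {0..1})"
    by (rule continuous_map_eq[OF assms(1)]) auto
  then show ?thesis
    using assms by (simp add: loops_def zero_prod_def)
qed

lemma loopsD:
  assumes "f \<in> loops X"
  shows "continuous_map (top_of_set {0..1}) X f" "f 0 = 0" "f 1 = 0" "restrict f {0..1} = f"
  using assms by (auto simp: loops_def zero_prod_def extensional_restrict)

lemma topspace_compact_open_loops [simp]: "topspace (compact_open_loops X) = loops X"
proof -
  have "loops X \<in> {{f \<in> loops X. f ` K \<subseteq> U} | K U. K \<subseteq> {0..1} \<and> compact K \<and> openin X U}"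
    by (intro CollectI exI[of _ "{}"]) auto
  then show ?thesis
    unfolding compact_open_loops_def topology_generated_by_topspace by auto
qed

lemma openin_tube_preimage:
  assumes K: "continuous_map (top_of_set (S \<times> R)) X K" and C: "C \<subseteq> R" "compact C" and U: "openin X U"
  shows "openin (top_of_set S) {s \<in> S. \<forall>t\<in>C. K (s, t) \<in> U}"
proof (subst openin_subopen, intro ballI)
  fix s0 assume s0: "s0 \<in> {s \<in> S. \<forall>t\<in>C. K (s, t) \<in> U}"
  obtain W where W: "open W" "{x \<in> S \<times> R. K x \<in> U} = (S \<times> R) \<inter> W"
    using openin_continuous_map_preimage[OF K U] by (auto simp: openin_open)
  have "{s0} \<times> C \<subseteq> W"
    using s0 C(1) W(2) by blast
  then obtain N where N: "s0 \<in> N" "open N" "N \<times> C \<subseteq> W"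
    using Elementary_Topology.tube_lemma[OF C(2) W(1)] by blast
  have "S \<inter> N \<subseteq> {s \<in> S. \<forall>t\<in>C. K (s, t) \<in> U}"
    using N(3) W(2) C(1) by blast
  then show "\<exists>Q. openin (top_of_set S) Q \<and> s0 \<in> Q \<and> Q \<subseteq> {s \<in> S. \<forall>t\<in>C. K (s, t) \<in> U}"
    using N s0 by (intro exI[of _ "S \<inter> N"]) (auto simp: openin_open_Int)
qed

lemma path_component_of_loops_homotopy:
  fixes K :: "real \<times> real \<Rightarrow> real \<times> real"
  assumes K: "continuous_map (top_of_set ({0..1} \<times> {0..1})) X K"
    and K0: "\<And>s. s \<in> {0..1} \<Longrightarrow> K (s, 0) = 0" and K1: "\<And>s. s \<in> {0..1} \<Longrightarrow> K (s, 1) = 0"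
  shows "path_component_of (compact_open_loops X)
           (restrict (\<lambda>t. K (0, t)) {0..1}) (restrict (\<lambda>t. K (1, t)) {0..1})"
proof -
  define p where "p s = restrict (\<lambda>t. K (s, t)) {0..1}" for s
  have p: "p s \<in> loops X" if "s \<in> {0..1}" for s
    unfolding p_def using that K0 K1
    by (intro restrict_in_loops continuous_map_compose_continuous_on[OF K]) (auto intro: continuous_intros)
  have "continuous_map (top_of_set {0..1}) (compact_open_loops X) p"
    unfolding compact_open_loops_def
  proof (intro continuous_on_generated_topo)
    fix W assume "W \<in> {{f \<in> loops X. f ` C \<subseteq> U} | C U. C \<subseteq> {0..1} \<and> compact C \<and> openin X U}"
    then obtain C U where W: "W = {f \<in> loops X. f ` C \<subseteq> U}" "C \<subseteq> {0..1}" "compact C" "openin X U"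
      by blast
    have "p s ` C = (\<lambda>t. K (s, t)) ` C" for s
      using W(2) by (auto simp: p_def)
    then have "p -` W \<inter> topspace (top_of_set {0..1}) = {s \<in> {0..1}. \<forall>t\<in>C. K (s, t) \<in> U}"
      using p W(1) by auto
    then show "openin (top_of_set {0..1}) (p -` W \<inter> topspace (top_of_set {0..1}))"
      using openin_tube_preimage[OF K W(2-4)] by simp
  next
    show "p ` topspace (top_of_set {0..1}) \<subseteq> \<Union> {{f \<in> loops X. f ` C \<subseteq> U} | C U. C \<subseteq> {0..1} \<and> compact C \<and> openin X U}"
      using p topspace_compact_open_loops[of X]
      unfolding compact_open_loops_def topology_generated_by_topspace by auto
  qed
  then have "pathin (compact_open_loops X) p"
    by (simp add: pathin_def)
  then show ?thesis
    unfolding path_component_of_def p_def by auto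
qed

lemma path_component_of_loops_reparametrization:
  fixes G :: "real \<Rightarrow> real \<times> real" and \<phi> \<psi> :: "real \<Rightarrow> real"
  assumes G: "continuous_map (top_of_set C) X G" and "convex C"
    and \<phi>: "continuous_on {0..1} \<phi>" "\<phi> ` {0..1} \<subseteq> C" and \<psi>: "continuous_on {0..1} \<psi>" "\<psi> ` {0..1} \<subseteq> C"
    and ends: "\<phi> 0 = \<psi> 0" "\<phi> 1 = \<psi> 1" "G (\<phi> 0) = 0" "G (\<phi> 1) = 0"
  shows "path_component_of (compact_open_loops X) (restrict (G \<circ> \<phi>) {0..1}) (restrict (G \<circ> \<psi>) {0..1})"
proof -
  define a where "a p = (1 - fst p) * \<phi> (snd p) + fst p * \<psi> (snd p)" for p :: "real \<times> real"
  have "continuous_on ({0..1} \<times> {0..1}) a"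
    unfolding a_def
    by (intro continuous_intros continuous_on_compose2[OF \<phi>(1)] continuous_on_compose2[OF \<psi>(1)]) auto
  moreover have "a p \<in> C" if "p \<in> {0..1} \<times> {0..1}" for p
  proof -
    have "\<phi> (snd p) \<in> C" "\<psi> (snd p) \<in> C"
      using that \<phi>(2) \<psi>(2) by (auto simp: mem_Times_iff)
    from convexD[OF \<open>convex C\<close> this, of "1 - fst p" "fst p"] show ?thesis
      using that by (simp add: a_def mem_Times_iff)
  qed
  then have "a ` ({0..1} \<times> {0..1}) \<subseteq> C"
    by blast
  ultimately have "continuous_map (top_of_set ({0..1} \<times> {0..1})) X (\<lambda>p. G (a p))"
    by (rule continuous_map_compose_continuous_on[OF G])
  from path_component_of_loops_homotopy[OF this] show ?thesis
    using ends by (simp add: a_def o_def algebra_simps)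
qed

definition join_at :: "real \<Rightarrow> (real \<Rightarrow> 'a) \<Rightarrow> (real \<Rightarrow> 'a) \<Rightarrow> real \<Rightarrow> 'a" where
  "join_at e l f = restrict (\<lambda>t. if t \<le> e then l (t / e) else f ((t - e) / (1 - e))) {0..1}"

lemma continuous_map_join_at:
  fixes e :: real
  assumes l: "continuous_map (top_of_set {0..1}) X l" and f: "continuous_map (top_of_set {0..1}) X f"
    and "l 1 = f 0" and e: "0 < e" "e < 1"
  shows "continuous_map (top_of_set {0..1}) X (\<lambda>t. if t \<le> e then l (t / e) else f ((t - e) / (1 - e)))"
proof (rule continuous_map_cases_le_on[where h = "\<lambda>t. t" and c = e and f = "\<lambda>t. l (t / e)"
      and g = "\<lambda>t. f ((t - e) / (1 - e))"])
  show "continuous_map (top_of_set {t \<in> {0..1}. t \<le> e}) X (\<lambda>t. l (t / e))"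
    by (rule continuous_map_compose_continuous_on[OF l]) (use e in \<open>auto intro!: continuous_intros simp: field_simps\<close>)
  show "continuous_map (top_of_set {t \<in> {0..1}. e \<le> t}) X (\<lambda>t. f ((t - e) / (1 - e)))"
    by (rule continuous_map_compose_continuous_on[OF f]) (use e in \<open>auto intro!: continuous_intros simp: field_simps\<close>)
qed (use assms in auto)

lemma join_at_in_loops:
  assumes l: "l \<in> loops X" and f: "f \<in> loops X" and e: "0 < e" "e < 1"
  shows "join_at e l f \<in> loops X"
  unfolding join_at_def
  using e loopsD[OF l] loopsD[OF f] by (intro restrict_in_loops continuous_map_join_at) auto

lemma join_at_restrict: "0 < e \<Longrightarrow> join_at e (restrict l {0..1}) f = join_at e l f"
  by (auto simp: join_at_def cong: if_cong intro!: restrict_ext)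

lemma reversepath_in_loops:
  assumes "f \<in> loops X"
  shows "restrict (reversepath f) {0..1} \<in> loops X"
proof -
  have "continuous_map (top_of_set {0..1}) X (\<lambda>t. f (1 - t))"
    by (rule continuous_map_compose_continuous_on[OF loopsD(1)[OF assms]]) (auto intro!: continuous_intros)
  then show ?thesis
    using loopsD[OF assms] unfolding reversepath_def by (intro restrict_in_loops) auto
qed

lemma path_component_of_join_at_homotopy:
  fixes L :: "real \<times> real \<Rightarrow> real \<times> real"
  assumes L: "continuous_map (top_of_set ({0..1} \<times> {0..1})) X L"
    and L0: "\<And>s. s \<in> {0..1} \<Longrightarrow> L (s, 0) = 0" and L1: "\<And>s. s \<in> {0..1} \<Longrightarrow> L (s, 1) = 0"
    and f: "f \<in> loops X" and e: "0 < e" "e < 1"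
  shows "path_component_of (compact_open_loops X) (join_at e (\<lambda>t. L (0, t)) f) (join_at e (\<lambda>t. L (1, t)) f)"
proof -
  define K where "K p = (if snd p \<le> e then L (fst p, snd p / e) else f ((snd p - e) / (1 - e)))"
    for p :: "real \<times> real"
  have "continuous_map (top_of_set ({0..1} \<times> {0..1})) X K"
    unfolding K_def
  proof (rule continuous_map_cases_le_on)
    show "continuous_map (top_of_set {p \<in> {0..1} \<times> {0..1}. snd p \<le> e}) X (\<lambda>p. L (fst p, snd p / e))"
      by (rule continuous_map_compose_continuous_on[OF L])
        (use e in \<open>auto intro!: continuous_intros simp: field_simps\<close>)
    show "continuous_map (top_of_set {p \<in> {0..1} \<times> {0..1}. e \<le> snd p}) X (\<lambda>p. f ((snd p - e) / (1 - e)))"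
      by (rule continuous_map_compose_continuous_on[OF loopsD(1)[OF f]])
        (use e in \<open>auto intro!: continuous_intros simp: field_simps\<close>)
  qed (use e L1 loopsD(2)[OF f] in \<open>auto intro: continuous_intros\<close>)
  moreover have "restrict (\<lambda>t. K (s, t)) {0..1} = join_at e (\<lambda>t. L (s, t)) f" for s
    by (simp add: K_def join_at_def cong: if_cong)
  ultimately show ?thesis
    using path_component_of_loops_homotopy[of X K] e L0 loopsD(3)[OF f] by (simp add: K_def)
qed

lemma continuous_map_loop_then_reversed:
  assumes g: "g \<in> loops X" and f: "f \<in> loops X"
  shows "continuous_map (top_of_set {0..2}) X (\<lambda>\<tau>. if \<tau> \<le> 1 then g \<tau> else f (2 - \<tau>))"
proof (rule continuous_map_cases_le_on[where h = "\<lambda>t. t" and c = 1 and f = g and g = "\<lambda>t. f (2 - t)"])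
  have "{t \<in> {0..2::real}. t \<le> 1} = {0..1}"
    by auto
  then show "continuous_map (top_of_set {t \<in> {0..2}. t \<le> 1}) X g"
    using loopsD(1)[OF g] by simp
  show "continuous_map (top_of_set {t \<in> {0..2}. 1 \<le> t}) X (\<lambda>t. f (2 - t))"
    by (rule continuous_map_compose_continuous_on[OF loopsD(1)[OF f]]) (auto intro!: continuous_intros)
qed (use loopsD(3)[OF g] loopsD(3)[OF f] in auto)

lemma path_component_of_join_at_cancel:
  assumes g: "g \<in> loops X" and f: "f \<in> loops X" and e: "0 < e" "e < 1"
  shows "path_component_of (compact_open_loops X) g
           (join_at e (join_at (1/2) g (restrict (reversepath f) {0..1})) f)"
proof -
  \<comment> \<open>both loops are reparametrisations of the path through \<open>g\<close> and then backwards through \<open>f\<close>\<close>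
  define G where "G \<tau> = (if \<tau> \<le> 1 then g \<tau> else f (2 - \<tau>))" for \<tau> :: real
  define \<psi> where "\<psi> t = (if t \<le> e then 2 * t / e else 2 - (t - e) / (1 - e))" for t :: real
  have G: "continuous_map (top_of_set {0..2}) X G"
    unfolding G_def by (rule continuous_map_loop_then_reversed[OF g f])
  have "continuous_on {0..1} \<psi>"
    unfolding \<psi>_def using e by (intro continuous_on_cases_le continuous_intros) auto
  moreover have "\<psi> ` {0..1} \<subseteq> {0..2}"
    using e by (auto simp: \<psi>_def field_simps)
  ultimately have "path_component_of (compact_open_loops X) (restrict (G \<circ> (\<lambda>t. t)) {0..1})
      (restrict (G \<circ> \<psi>) {0..1})"
    using e loopsD(2,3)[OF g]
    by (intro path_component_of_loops_reparametrization[OF G]) (auto simp: \<psi>_def G_def)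
  moreover have "restrict (G \<circ> (\<lambda>t. t)) {0..1} = g"
    using loopsD(4)[OF g] by (auto simp: G_def cong: restrict_cong)
  moreover have "restrict (G \<circ> \<psi>) {0..1} = join_at e (join_at (1/2) g (restrict (reversepath f) {0..1})) f"
    unfolding join_at_def
  proof (rule restrict_ext)
    fix t :: real assume t: "t \<in> {0..1}"
    show "(G \<circ> \<psi>) t = (if t \<le> e then (\<lambda>t\<in>{0..1}. if t \<le> 1/2 then g (t / (1/2))
        else restrict (reversepath f) {0..1} ((t - 1/2) / (1 - 1/2))) (t / e) else f ((t - e) / (1 - e)))"
    proof (cases "t \<le> e")
      case True
      define u where "u = t / e"
      have u: "0 \<le> u" "u \<le> 1" "\<psi> t = 2 * u" "(u - 1/2) / (1 - 1/2) = 2 * u - 1"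
        using t e True by (auto simp: u_def \<psi>_def field_simps)
      show ?thesis
        using True u by (simp add: G_def reversepath_def mult.commute flip: u_def)
    next
      case False
      then show ?thesis
        using t e loopsD(3)[OF g] loopsD(3)[OF f] by (auto simp: G_def \<psi>_def field_simps)
    qed
  qed
  ultimately show ?thesis
    by simp
qed

lemma join_at_tail_shift:
  fixes e t :: real
  assumes e: "0 < e" "e \<le> 1/2" and t: "e \<le> t" "t \<le> 1"
  shows "(t - e) / (1 - e) \<in> {0..1}" "dist t ((t - e) / (1 - e)) \<le> 2 * e"
proof -
  have shift: "t - (t - e) / (1 - e) = e * (1 - t) / (1 - e)"
    using e by (simp add: field_simps)
  have "e * (1 - t) \<le> e * (2 * (1 - e))"
    using e t by (intro mult_left_mono) auto
  then have "e * (1 - t) / (1 - e) \<le> 2 * e"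
    using e by (simp add: pos_divide_le_eq)
  moreover have "0 \<le> e * (1 - t) / (1 - e)"
    using e t by simp
  ultimately show "dist t ((t - e) / (1 - e)) \<le> 2 * e"
    by (simp only: dist_real_def shift abs_of_nonneg)
  show "(t - e) / (1 - e) \<in> {0..1}"
    using e t by (simp add: field_simps)
qed

definition absorbs_short_prefixes :: "(real \<times> real) topology \<Rightarrow> (real \<Rightarrow> real \<times> real) set \<Rightarrow> bool" where
  "absorbs_short_prefixes X A \<longleftrightarrow> (\<forall>f\<in>A. \<exists>V e0. openin X V \<and> 0 \<in> V \<and> 0 < e0 \<and>
     (\<forall>e l. 0 < e \<longrightarrow> e < e0 \<longrightarrow> l \<in> loops X \<longrightarrow> l ` {0..1} \<subseteq> V \<longrightarrow> join_at e l f \<in> A))"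

lemma absorbs_short_prefixesD:
  assumes "absorbs_short_prefixes X A" "f \<in> A"
  obtains V e0 where "openin X V" "0 \<in> V" "0 < e0"
    "\<And>e l. 0 < e \<Longrightarrow> e < e0 \<Longrightarrow> l \<in> loops X \<Longrightarrow> l ` {0..1} \<subseteq> V \<Longrightarrow> join_at e l f \<in> A"
proof -
  have "\<exists>V e0. openin X V \<and> 0 \<in> V \<and> 0 < e0 \<and>
      (\<forall>e l. 0 < e \<longrightarrow> e < e0 \<longrightarrow> l \<in> loops X \<longrightarrow> l ` {0..1} \<subseteq> V \<longrightarrow> join_at e l f \<in> A)"
    using assms unfolding absorbs_short_prefixes_def by (rule bspec)
  then show thesis
    by (elim exE conjE) (rule that; auto)
qed

lemma compact_preimage_margin:
  fixes f :: "'a::heine_borel \<Rightarrow> 'b"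
  assumes f: "continuous_map (top_of_set S) X f" and C: "compact C" "C \<subseteq> S"
    and U: "openin X U" "f ` C \<subseteq> U"
  obtains \<delta> where "\<delta> > 0" "\<And>s t. s \<in> C \<Longrightarrow> t \<in> S \<Longrightarrow> dist s t < \<delta> \<Longrightarrow> f t \<in> U"
proof -
  obtain W where W: "open W" "{t \<in> S. f t \<in> U} = S \<inter> W"
    using openin_continuous_map_preimage[OF f U(1)] by (auto simp: openin_open)
  have "C \<inter> - W = {}"
    using C(2) U(2) W(2) by blast
  then obtain \<delta> where "\<delta> > 0" "\<And>s t. s \<in> C \<Longrightarrow> t \<in> - W \<Longrightarrow> \<delta> \<le> dist s t"
    using separate_compact_closed[OF C(1)] W(1) by (metis closed_Compl)
  then show ?thesis
    using that W(2) by (metis (mono_tags, lifting) ComplI IntI mem_Collect_eq not_le)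
qed

lemma base_point_nbhd_near_start:
  fixes C :: "real set"
  assumes C: "C \<subseteq> {0..}" "compact C" and U: "openin X U"
    and "0 \<in> topspace X" and "0 \<in> C \<Longrightarrow> 0 \<in> U"
  obtains V e1 where "openin X V" "0 \<in> V" "0 < e1" "\<And>t. t \<in> C \<Longrightarrow> t < e1 \<Longrightarrow> V \<subseteq> U"
proof (cases "0 \<in> U")
  case True
  then show ?thesis
    using that[of U 1] U by simp
next
  case False
  then obtain e1 where "e1 > 0" "ball 0 e1 \<subseteq> - C"
    using assms(5) compact_imp_closed[OF C(2)] by (metis Compl_iff open_Compl open_contains_ball)
  then have "\<And>t. t \<in> C \<Longrightarrow> e1 \<le> t"
    using C(1) by (force simp: dist_real_def subset_iff)
  then show ?thesis
    using that[of "topspace X" e1] \<open>e1 > 0\<close> assms(4) by force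
qed

lemma absorbs_short_prefixes_subbasic:
  assumes C: "C \<subseteq> {0..1}" "compact C" and U: "openin X U"
  shows "absorbs_short_prefixes X {f \<in> loops X. f ` C \<subseteq> U}"
  unfolding absorbs_short_prefixes_def
proof
  fix f assume "f \<in> {f \<in> loops X. f ` C \<subseteq> U}"
  then have f: "f \<in> loops X" "f ` C \<subseteq> U"
    by auto
  obtain \<delta> where \<delta>: "\<delta> > 0" "\<And>s t. s \<in> C \<Longrightarrow> t \<in> {0..1} \<Longrightarrow> dist s t < \<delta> \<Longrightarrow> f t \<in> U"
    using compact_preimage_margin[OF loopsD(1)[OF f(1)] C(2,1) U f(2)] by blast
  have "C \<subseteq> {0..}" "0 \<in> topspace X" "0 \<in> C \<Longrightarrow> 0 \<in> U"
    using C(1) f continuous_map_image_subset_topspace[OF loopsD(1)[OF f(1)]] loopsD(2)[OF f(1)]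
    by force+
  then obtain V e1 where V: "openin X V" "0 \<in> V" "0 < e1" "\<And>t. t \<in> C \<Longrightarrow> t < e1 \<Longrightarrow> V \<subseteq> U"
    using base_point_nbhd_near_start[OF _ C(2) U] by blast
  show "\<exists>V e0. openin X V \<and> 0 \<in> V \<and> 0 < e0 \<and> (\<forall>e l. 0 < e \<longrightarrow> e < e0 \<longrightarrow> l \<in> loops X \<longrightarrow>
          l ` {0..1} \<subseteq> V \<longrightarrow> join_at e l f \<in> {f \<in> loops X. f ` C \<subseteq> U})"
  proof (intro exI conjI allI impI)
    show "0 < min (min (\<delta> / 2) (1/2)) e1"
      using \<delta>(1) V(3) by simp
    fix e l assume e: "0 < e" "e < min (min (\<delta> / 2) (1/2)) e1" and l: "l \<in> loops X" "l ` {0..1} \<subseteq> V"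
    \<comment> \<open>after time \<open>e\<close> the loop is \<open>f\<close> delayed by at most \<open>2 * e < \<delta>\<close>\<close>
    have "join_at e l f t \<in> U" if t: "t \<in> C" for t
    proof (cases "t \<le> e")
      case True
      then have "t / e \<in> {0..1}"
        using t C(1) e by auto
      then have "l (t / e) \<in> V"
        using l(2) by blast
      then show ?thesis
        using True t C(1) V(4)[OF t] e by (auto simp: join_at_def)
    next
      case False
      then have "(t - e) / (1 - e) \<in> {0..1}" "dist t ((t - e) / (1 - e)) < \<delta>"
        using join_at_tail_shift[of e t] e t C(1) by auto
      then show ?thesis
        using False t C(1) \<delta>(2)[OF t] by (auto simp: join_at_def)
    qed
    then show "join_at e l f \<in> {f \<in> loops X. f ` C \<subseteq> U}"
      using join_at_in_loops[OF l(1) f(1)] e by auto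
  qed (use V in auto)
qed

lemma absorbs_short_prefixes_Int:
  assumes "absorbs_short_prefixes X A" "absorbs_short_prefixes X B"
  shows "absorbs_short_prefixes X (A \<inter> B)"
  unfolding absorbs_short_prefixes_def
proof
  fix f assume f: "f \<in> A \<inter> B"
  obtain V1 e1 where V1: "openin X V1" "0 \<in> V1" "0 < e1"
    "\<And>e l. 0 < e \<Longrightarrow> e < e1 \<Longrightarrow> l \<in> loops X \<Longrightarrow> l ` {0..1} \<subseteq> V1 \<Longrightarrow> join_at e l f \<in> A"
    using absorbs_short_prefixesD[OF assms(1)] f by blast
  obtain V2 e2 where V2: "openin X V2" "0 \<in> V2" "0 < e2"
    "\<And>e l. 0 < e \<Longrightarrow> e < e2 \<Longrightarrow> l \<in> loops X \<Longrightarrow> l ` {0..1} \<subseteq> V2 \<Longrightarrow> join_at e l f \<in> B"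
    using absorbs_short_prefixesD[OF assms(2)] f by blast
  show "\<exists>V e0. openin X V \<and> 0 \<in> V \<and> 0 < e0 \<and> (\<forall>e l. 0 < e \<longrightarrow> e < e0 \<longrightarrow> l \<in> loops X \<longrightarrow>
      l ` {0..1} \<subseteq> V \<longrightarrow> join_at e l f \<in> A \<inter> B)"
  proof (intro exI[of _ "V1 \<inter> V2"] exI[of _ "min e1 e2"] conjI allI impI)
    fix e l assume "0 < e" "e < min e1 e2" "l \<in> loops X" "l ` {0..1} \<subseteq> V1 \<inter> V2"
    then show "join_at e l f \<in> A \<inter> B"
      using V1(4)[of e l] V2(4)[of e l] by simp
  qed (use V1 V2 in auto)
qed

lemma absorbs_short_prefixes_Union:
  assumes "\<And>A. A \<in> \<A> \<Longrightarrow> absorbs_short_prefixes X A"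
  shows "absorbs_short_prefixes X (\<Union>\<A>)"
  unfolding absorbs_short_prefixes_def
proof
  fix f assume "f \<in> \<Union>\<A>"
  then obtain A where A: "A \<in> \<A>" "f \<in> A"
    by blast
  then obtain V e0 where V: "openin X V" "0 \<in> V" "0 < e0"
    "\<And>e l. 0 < e \<Longrightarrow> e < e0 \<Longrightarrow> l \<in> loops X \<Longrightarrow> l ` {0..1} \<subseteq> V \<Longrightarrow> join_at e l f \<in> A"
    using absorbs_short_prefixesD[OF assms] by metis
  show "\<exists>V e0. openin X V \<and> 0 \<in> V \<and> 0 < e0 \<and> (\<forall>e l. 0 < e \<longrightarrow> e < e0 \<longrightarrow> l \<in> loops X \<longrightarrow>
      l ` {0..1} \<subseteq> V \<longrightarrow> join_at e l f \<in> \<Union>\<A>)"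
    using V A(1) by (intro exI[of _ V] exI[of _ e0]) auto
qed

lemma absorbs_short_prefixes_if_open:
  assumes "openin (compact_open_loops X) A"
  shows "absorbs_short_prefixes X A"
proof -
  have "generate_topology_on {{f \<in> loops X. f ` C \<subseteq> U} | C U. C \<subseteq> {0..1} \<and> compact C \<and> openin X U} A"
    using assms unfolding compact_open_loops_def openin_topology_generated_by_iff .
  then show ?thesis
  proof induct
    case Empty
    then show ?case
      by (simp add: absorbs_short_prefixes_def)
  next
    case (Int a b)
    then show ?case
      by (simp add: absorbs_short_prefixes_Int)
  next
    case (UN K)
    then show ?case
      by (intro absorbs_short_prefixes_Union) simp
  next
    case (Basis s)
    then show ?case
      using absorbs_short_prefixes_subbasic by blast
  qed
qed

section \<open>Quotients by path components\<close>

lemma openin_quotient_topology: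
  "openin (quotient_topology X q) U \<longleftrightarrow> U \<subseteq> q ` topspace X \<and> openin X {x \<in> topspace X. q x \<in> U}"
proof -
  have "istopology (\<lambda>U. U \<subseteq> q ` topspace X \<and> openin X {x \<in> topspace X. q x \<in> U})"
    unfolding istopology_def
  proof (rule conjI; intro allI impI)
    fix S T
    assume S: "S \<subseteq> q ` topspace X \<and> openin X {x \<in> topspace X. q x \<in> S}"
      and T: "T \<subseteq> q ` topspace X \<and> openin X {x \<in> topspace X. q x \<in> T}"
    have "{x \<in> topspace X. q x \<in> S \<inter> T} = {x \<in> topspace X. q x \<in> S} \<inter> {x \<in> topspace X. q x \<in> T}"
      by blast
    then show "S \<inter> T \<subseteq> q ` topspace X \<and> openin X {x \<in> topspace X. q x \<in> S \<inter> T}"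
      using S T by (simp add: le_infI1 openin_Int)
  next
    fix \<K> assume K: "\<forall>S\<in>\<K>. S \<subseteq> q ` topspace X \<and> openin X {x \<in> topspace X. q x \<in> S}"
    have "{x \<in> topspace X. q x \<in> \<Union>\<K>} = (\<Union>S\<in>\<K>. {x \<in> topspace X. q x \<in> S})"
      by blast
    moreover have "openin X (\<Union>S\<in>\<K>. {x \<in> topspace X. q x \<in> S})"
      using K by (intro openin_Union) blast
    ultimately show "\<Union>\<K> \<subseteq> q ` topspace X \<and> openin X {x \<in> topspace X. q x \<in> \<Union>\<K>}"
      using K by (simp add: Union_least)
  qed
  then show ?thesis
    by (simp add: quotient_topology_def)
qed

lemma topspace_quotient_topology: "topspace (quotient_topology X q) = q ` topspace X"
proof (rule antisym)
  show "topspace (quotient_topology X q) \<subseteq> q ` topspace X"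
    using openin_topspace[of "quotient_topology X q"] unfolding openin_quotient_topology by blast
  have "{x \<in> topspace X. q x \<in> q ` topspace X} = topspace X"
    by blast
  then have "openin (quotient_topology X q) (q ` topspace X)"
    by (simp add: openin_quotient_topology)
  then show "q ` topspace X \<subseteq> topspace (quotient_topology X q)"
    by (rule openin_subset)
qed

lemma quotient_path_components_indiscrete:
  assumes nonempty: "topspace X \<noteq> {}"
    and meets: "\<And>A f g. openin X A \<Longrightarrow> f \<in> A \<Longrightarrow> g \<in> topspace X \<Longrightarrow> \<exists>h\<in>A. path_component_of X g h"
  shows "{U. openin (quotient_topology X (path_component_of_set X)) U \<and> U \<noteq> {}}
           = {topspace (quotient_topology X (path_component_of_set X))}"
    (is "{U. openin ?Q U \<and> U \<noteq> {}} = {topspace ?Q}")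
proof (intro equalityI subsetI)
  fix U assume "U \<in> {U. openin ?Q U \<and> U \<noteq> {}}"
  then have U: "U \<subseteq> path_component_of_set X ` topspace X"
      "openin X {x \<in> topspace X. path_component_of_set X x \<in> U}" "U \<noteq> {}"
    by (auto simp: openin_quotient_topology)
  then obtain f where f: "f \<in> topspace X" "path_component_of_set X f \<in> U"
    by blast
  have "path_component_of_set X g \<in> U" if g: "g \<in> topspace X" for g
  proof -
    obtain h where "h \<in> topspace X" "path_component_of_set X h \<in> U" "path_component_of X g h"
      using meets[OF U(2) _ g] f by auto
    then show ?thesis
      by (metis path_component_of_equiv)
  qed
  then have "U = topspace ?Q"
    using U(1) by (auto simp: topspace_quotient_topology)
  then show "U \<in> {topspace ?Q}"
    by simp
next
  fix U assume "U \<in> {topspace ?Q}"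
  then show "U \<in> {U. openin ?Q U \<and> U \<noteq> {}}"
    using nonempty openin_topspace[of ?Q] by (simp add: topspace_quotient_topology)
qed

section \<open>Admissible topologies on the harmonic archipelago\<close>

locale harmonic_archipelago =
  fixes T :: "(real \<times> real) topology"
  assumes HA_topology: "HA_topology T"
begin

lemma topspace_T [simp]: "topspace T = HA"
  using HA_topology by (simp add: HA_topology_def)

lemma subtopology_Yup: "n \<ge> 1 \<Longrightarrow> subtopology T (Yup n) = top_of_set (Yup n)"
  using HA_topology by (simp add: HA_topology_def)

lemma ball_Int_Yup_subset_open:
  assumes "openin T U" "0 \<in> U" "n \<ge> 1"
  obtains r where "r > 0" "ball 0 r \<inter> Yup n \<subseteq> U"
proof -
  have "openin (top_of_set (Yup n)) (U \<inter> Yup n)"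
    using assms by (metis openin_subtopology_Int subtopology_Yup)
  then show ?thesis
    using assms(2) origin_in_Yup that unfolding openin_contains_ball by blast
qed

lemma closedin_Yup:
  assumes "n \<ge> 1"
  shows "closedin T (Yup n)"
  unfolding closedin_def
proof
  show "Yup n \<subseteq> topspace T"
    using Yup_subset_HA by simp
  show "openin T (topspace T - Yup n)"
  proof (subst openin_subopen, intro ballI)
    fix x assume x: "x \<in> topspace T - Yup n"
    then obtain m where m: "m \<ge> 1" "x \<in> Yup m"
      unfolding topspace_T HA_def by blast
    define k where "k = annulus_index x"
    have k: "n < k" "x \<in> open_annulus k"
      using annulus_index_outside_Yup[of x n] x by (simp_all add: k_def)
    have "openin (subtopology T (Yup m)) (Yup m \<inter> open_annulus k)"
      using subtopology_Yup[OF m(1)] open_open_annulus by (simp add: openin_open_Int)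
    then obtain V where V: "openin T V" "Yup m \<inter> open_annulus k = V \<inter> Yup m"
      unfolding openin_subtopology by blast
    have "n < m"
    proof (rule ccontr)
      assume "\<not> n < m"
      then have "Yup m \<subseteq> Yup n"
        by (intro Yup_mono) simp
      then show False
        using m x by blast
    qed
    then have "V \<inter> Yup n \<subseteq> open_annulus k \<inter> Yup n"
      using V(2) Yup_mono[of n m] by auto
    then have "V \<inter> Yup n = {}"
      using open_annulus_disjoint_Yup[OF k(1)] by auto
    moreover have "x \<in> V"
      using V(2) m(2) k(2) by auto
    ultimately show "\<exists>U. openin T U \<and> x \<in> U \<and> U \<subseteq> topspace T - Yup n"
      using V(1) openin_subset[OF V(1)] by auto
  qed
qed

lemma limit_of_annulus_points_is_origin:
  assumes k: "strict_mono k" "\<And>i. k i \<ge> 1" and w: "\<And>i. w i \<in> interior (Ann (k i))"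
    and lim: "limitin T w p sequentially"
  shows "p = 0"
proof -
  obtain z where z: "\<And>j. z j \<in> interior (Ann (Suc j))"
    using HA_topology by (auto simp: HA_topology_def)
  \<comment> \<open>padding \<open>w\<close> with the points of condition (1) gives a sequence through all annuli\<close>
  define y where "y j = (if Suc j \<in> range k then w (inv k (Suc j)) else z j)" for j
  have "inj k"
    using k(1) strict_mono_imp_inj_on by blast
  then have "y (k i - 1) = w i" for i
    using k(2)[of i] by (simp add: y_def)
  then have "y \<circ> (\<lambda>i. k i - 1) = w"
    by auto
  moreover have "strict_mono (\<lambda>i. k i - 1)"
    using k by (simp add: strict_mono_def diff_less_mono strict_mono_less)
  moreover have "\<forall>j. y j \<in> interior (Ann (Suc j))"
    using w z \<open>inj k\<close> by (auto simp: y_def)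
  ultimately have "subseq_limit T y p"
    using lim unfolding subseq_limit_def by metis
  with \<open>\<forall>j. y j \<in> interior (Ann (Suc j))\<close> show ?thesis
    using HA_topology unfolding HA_topology_def zero_prod_def by blast
qed

lemma limit_of_escaping_sequence_is_origin:
  assumes lim: "limitin T x p sequentially" and x: "\<And>j. x j \<in> HA"
    and escapes: "\<And>n j0. \<exists>j\<ge>j0. x j \<notin> Yup n"
  shows "p = 0"
proof -
  have "\<exists>r. \<forall>i. x (r i) \<notin> Yup 1 \<and>
          r i < r (Suc i) \<and> annulus_index (x (r i)) < annulus_index (x (r (Suc i)))"
  proof (rule dependent_nat_choice)
    show "\<exists>j. x j \<notin> Yup 1"
      using escapes by blast
    fix j :: nat and i :: nat
    assume j: "x j \<notin> Yup 1"
    obtain j' where j': "j' \<ge> Suc j" "x j' \<notin> Yup (annulus_index (x j))"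
      using escapes by blast
    moreover have "1 < annulus_index (x j)"
      using annulus_index_outside_Yup(1)[OF x j] .
    ultimately show "\<exists>j'. x j' \<notin> Yup 1 \<and> j < j' \<and> annulus_index (x j) < annulus_index (x j')"
      using annulus_index_outside_Yup(1)[OF x] Yup_mono[of 1 "annulus_index (x j)"]
      by (intro exI[of _ j']) auto
  qed
  then obtain r where r: "\<And>i. x (r i) \<notin> Yup 1" "\<And>i. r i < r (Suc i)"
    "\<And>i. annulus_index (x (r i)) < annulus_index (x (r (Suc i)))"
    by blast
  show ?thesis
  proof (rule limit_of_annulus_points_is_origin)
    show "strict_mono (\<lambda>i. annulus_index (x (r i)))"
      by (intro strict_monoI_Suc r(3))
    show "limitin T (x \<circ> r) p sequentially"
      by (intro limitin_subsequence[OF strict_monoI_Suc lim] r(2))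
    fix i
    show "1 \<le> annulus_index (x (r i))"
      using annulus_index_outside_Yup(1)[OF x r(1)[of i]] by linarith
    then show "(x \<circ> r) i \<in> interior (Ann (annulus_index (x (r i))))"
      using annulus_index_outside_Yup(2)[OF x r(1)] open_annulus_subset_interior by auto
  qed
qed

lemma path_locally_in_Yup:
  fixes g :: "'a::metric_space \<Rightarrow> real \<times> real"
  assumes g: "continuous_map (top_of_set S) T g" and t: "t \<in> S" and nz: "g t \<noteq> 0"
  shows "\<exists>n\<ge>1. \<exists>d>0. \<forall>t'\<in>S. dist t' t < d \<longrightarrow> g t' \<in> Yup n"
proof (rule ccontr)
  assume "\<not> ?thesis"
  then have contra: "\<exists>t'\<in>S. dist t' t < d \<and> g t' \<notin> Yup n" if "n \<ge> 1" "d > 0" for n d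
    using that by auto
  have "\<forall>j. \<exists>t'. t' \<in> S \<and> dist t' t < inverse (real (Suc j)) \<and> g t' \<notin> Yup (Suc j)"
  proof
    fix j
    show "\<exists>t'. t' \<in> S \<and> dist t' t < inverse (real (Suc j)) \<and> g t' \<notin> Yup (Suc j)"
      using contra[of "Suc j" "inverse (real (Suc j))"] by auto
  qed
  from choice[OF this] obtain tt where tt: "\<And>j. tt j \<in> S"
      "\<And>j. dist (tt j) t < inverse (real (Suc j))" "\<And>j. g (tt j) \<notin> Yup (Suc j)"
    by blast
  have "tt \<longlonglongrightarrow> t"
    using tt(2)
    by (intro metric_tendsto_imp_tendsto[OF LIMSEQ_inverse_real_of_nat] always_eventually allI)
      (simp add: less_imp_le)
  then have "limitin (top_of_set S) tt t sequentially"
    using tt(1) t by (simp add: limitin_subtopology)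
  then have "limitin T (g \<circ> tt) (g t) sequentially"
    by (rule continuous_map_limit[OF g])
  moreover have "g (tt j) \<in> HA" for j
    using continuous_map_image_subset_topspace[OF g] tt(1) by auto
  moreover have "\<exists>j\<ge>j0. (g \<circ> tt) j \<notin> Yup n" for n j0
    using tt(3)[of "max j0 n"] Yup_mono[of n "Suc (max j0 n)"] by (intro exI[of _ "max j0 n"]) force
  ultimately have "g t = 0"
    by (intro limit_of_escaping_sequence_is_origin) auto
  with nz show False ..
qed

lemma Xc_eventually_in_open:
  assumes "openin T V" "0 \<in> V"
  obtains M where "\<And>m. m \<ge> M \<Longrightarrow> Xc m \<subseteq> V"
proof -
  obtain r where r: "r > 0" "ball 0 r \<inter> Yup 1 \<subseteq> V"
    using ball_Int_Yup_subset_open[OF assms] by auto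
  obtain M :: nat where M: "2 / r < real M"
    using reals_Archimedean2 by blast
  have "Xc m \<subseteq> V" if "m \<ge> M" for m
  proof
    fix z assume z: "z \<in> Xc m"
    have "2 / r < real m"
      using M that by (meson of_nat_le_iff less_le_trans)
    moreover have "0 < 2 / r"
      using r(1) by simp
    ultimately have m: "0 < real m" "2 < real m * r"
      using r(1) by (linarith, simp add: divide_less_eq)
    then have "2 / real m < r"
      by (simp add: divide_less_eq mult.commute)
    then have "z \<in> ball 0 r"
      using norm_le_of_mem_Xc[OF z] by simp
    moreover have "z \<in> Yup 1"
      using z Xc_subset_Yup[of m 1] m(1) by auto
    ultimately show "z \<in> V"
      using r(2) by blast
  qed
  then show ?thesis
    using that by blast
qed

lemma push_out_near_origin:
  assumes U: "openin T U" "0 \<in> U" and M: "M \<ge> 1"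
  obtains W where "openin T W" "0 \<in> W" "\<And>s z. s \<in> {0..1} \<Longrightarrow> z \<in> W \<Longrightarrow> push_out M s z \<in> U"
proof -
  obtain r where r: "r > 0" "ball 0 r \<inter> Yup M \<subseteq> U"
    using ball_Int_Yup_subset_open[OF U M] by auto
  have "closedin (top_of_set (Yup M)) (Yup M - ball 0 r)"
    using closedin_closed_Int[of "- ball 0 r" "Yup M"] by (simp add: Diff_eq closed_Compl)
  then have C: "closedin T (Yup M - ball 0 r)"
    using closedin_trans_full[OF _ closedin_Yup[OF M]] subtopology_Yup[OF M] by simp
  define W where "W = U - (Yup M - ball 0 r)"
  have "push_out M s z \<in> U" if s: "s \<in> {0..1}" and z: "z \<in> W" for s z
  proof (cases "z = 0 \<or> real M \<le> level z")
    case True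
    then show ?thesis
      using z s push_out_fixed by (auto simp: W_def)
  next
    case False
    have "z \<in> HA"
      using z openin_subset[OF U(1)] by (auto simp: W_def)
    then have "z \<in> Yup M"
      using False M by (auto simp: mem_HA_iff mem_Yup_iff)
    then have "z \<in> ball 0 r"
      using z by (auto simp: W_def)
    moreover have "0 \<le> level z"
      using \<open>z \<in> HA\<close> by (auto simp: mem_HA_iff)
    ultimately have "push_out M s z \<in> ball 0 r \<inter> Yup M"
      using push_out_mem_Yup[OF \<open>z \<in> Yup M\<close> _ _ M, of s] norm_push_out_le[of z M s] s
      by auto
    then show ?thesis
      using r(2) by blast
  qed
  moreover have "openin T W"
    using U(1) C by (simp add: W_def openin_diff)
  moreover have "0 \<in> W"
    using U(2) r(1) by (simp add: W_def)
  ultimately show ?thesis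
    using that by blast
qed

lemma continuous_map_into_Yup_iff:
  assumes "n \<ge> 1" "f ` topspace X \<subseteq> Yup n"
  shows "continuous_map X T f \<longleftrightarrow> continuous_map X (top_of_set (Yup n)) f"
  using assms continuous_map_in_subtopology[of X T "Yup n" f] subtopology_Yup[OF assms(1)]
  by (simp add: Pi_iff image_subset_iff)

lemma continuous_map_push_out_on_Yup:
  assumes n: "n \<ge> 1" and M: "M \<ge> 1"
  shows "continuous_map (top_of_set ({0..1} \<times> Yup n)) T (\<lambda>p. push_out M (fst p) (snd p))"
proof -
  have "continuous_on ({0..1} \<times> Yup n) (\<lambda>p. push_out M (fst p) (snd p))"
    by (rule continuous_on_subset[OF continuous_on_push_out]) (use Yup_subset_HA in auto)
  moreover have "(\<lambda>p. push_out M (fst p) (snd p)) ` ({0..1} \<times> Yup n) \<subseteq> Yup (max n M)"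
  proof (rule image_subsetI)
    fix p :: "real \<times> real \<times> real" assume "p \<in> {0..1} \<times> Yup n"
    then show "push_out M (fst p) (snd p) \<in> Yup (max n M)"
      using push_out_mem_Yup[of "snd p" n "fst p" M] M by (simp add: mem_Times_iff)
  qed
  ultimately show ?thesis
    using continuous_map_into_Yup_iff[of "max n M" "\<lambda>p. push_out M (fst p) (snd p)"
        "top_of_set ({0..1} \<times> Yup n)"] n
    by (simp add: continuous_map_subtopology_eu image_subset_iff_funcset)
qed

lemma continuous_map_push_out_path_near:
  fixes g :: "'a::metric_space \<Rightarrow> real \<times> real"
  assumes g: "continuous_map (top_of_set S) T g" and M: "M \<ge> 1" and t: "t \<in> S" "g t \<noteq> 0"
  obtains d where "d > 0"
    "continuous_map (top_of_set ({0..1} \<times> (S \<inter> ball t d))) T (\<lambda>p. push_out M (fst p) (g (snd p)))"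
proof -
  obtain n d where n: "n \<ge> 1" and "d > 0" and d: "\<And>t'. t' \<in> S \<Longrightarrow> dist t' t < d \<Longrightarrow> g t' \<in> Yup n"
    using path_locally_in_Yup[OF g t] by blast
  have "continuous_map (top_of_set (S \<inter> ball t d)) T g"
    using continuous_map_from_subtopology[OF g, of "S \<inter> ball t d"] by (simp add: subtopology_subtopology)
  moreover have "g ` (S \<inter> ball t d) \<subseteq> Yup n"
    using d by (auto simp: dist_commute)
  ultimately have "continuous_on (S \<inter> ball t d) g"
    using continuous_map_into_Yup_iff[OF n, of g "top_of_set (S \<inter> ball t d)"]
    by (simp add: continuous_map_subtopology_eu)
  then have "continuous_on ({0..1} \<times> (S \<inter> ball t d)) (\<lambda>p. (fst p, g (snd p)))"
    by (intro continuous_intros continuous_on_compose2[OF \<open>continuous_on (S \<inter> ball t d) g\<close>]) auto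
  then have "continuous_map (top_of_set ({0..1} \<times> (S \<inter> ball t d))) (top_of_set ({0..1} \<times> Yup n))
      (\<lambda>p. (fst p, g (snd p)))"
    using d by (auto simp: continuous_map_subtopology_eu dist_commute)
  from continuous_map_compose[OF this continuous_map_push_out_on_Yup[OF n M]] show ?thesis
    using that \<open>d > 0\<close> by (simp add: o_def)
qed

lemma continuous_map_push_out_path:
  fixes g :: "'a::metric_space \<Rightarrow> real \<times> real"
  assumes g: "continuous_map (top_of_set S) T g" and M: "M \<ge> 1"
  shows "continuous_map (top_of_set ({0..1} \<times> S)) T (\<lambda>p. push_out M (fst p) (g (snd p)))"
proof -
  define D where "D = {0..1::real} \<times> S"
  define F where "F = (\<lambda>p. push_out M (fst p) (g (snd p)))"
  have snd: "continuous_map (top_of_set D) (top_of_set S) snd"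
    by (auto simp: D_def continuous_map_subtopology_eu intro: continuous_intros)
  have gD: "continuous_map (top_of_set D) T (\<lambda>p. g (snd p))"
    using continuous_map_compose[OF snd g] by (simp add: o_def)
  have "limitin T F (F p) (atin (top_of_set D) p)" if p: "p \<in> D" for p
    unfolding limitin_atin
  proof (intro conjI impI allI)
    have "g (snd p) \<in> HA"
      using continuous_map_image_subset_topspace[OF gD] p by auto
    then show "F p \<in> topspace T"
      using p M by (auto simp: F_def D_def intro: push_out_mem_HA)
    fix V assume V: "openin T V \<and> F p \<in> V"
    show "\<exists>U. openin (top_of_set D) U \<and> p \<in> U \<and> F ` (U - {p}) \<subseteq> V"
    proof (cases "g (snd p) = 0")
      case True
      then obtain W where W: "openin T W" "0 \<in> W"
          "\<And>s z. s \<in> {0..1} \<Longrightarrow> z \<in> W \<Longrightarrow> push_out M s z \<in> V"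
        using push_out_near_origin[of V] V M by (auto simp: F_def)
      have "F q \<in> V" if "q \<in> {q \<in> D. g (snd q) \<in> W}" for q
        using that W(3)[of "fst q" "g (snd q)"] by (simp add: F_def D_def mem_Times_iff)
      moreover have "openin (top_of_set D) {q \<in> D. g (snd q) \<in> W}"
        using openin_continuous_map_preimage[OF gD W(1)] by simp
      ultimately show ?thesis
        using p True W(2) by (intro exI[of _ "{q \<in> D. g (snd q) \<in> W}"]) auto
    next
      case False
      have "snd p \<in> S"
        using p by (simp add: D_def mem_Times_iff)
      then obtain d where "d > 0"
        and F: "continuous_map (top_of_set ({0..1} \<times> (S \<inter> ball (snd p) d))) T F"
        using continuous_map_push_out_path_near[OF g M _ False] unfolding F_def by blast
      define P where "P = {0..1::real} \<times> (S \<inter> ball (snd p) d)"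
      have "P = D \<inter> (UNIV \<times> ball (snd p) d)"
        by (auto simp: P_def D_def)
      then have "openin (top_of_set D) P"
        by (simp add: openin_open_Int open_Times)
      moreover have "openin (top_of_set P) {q \<in> P. F q \<in> V}"
        using openin_continuous_map_preimage[OF F[folded P_def]] V by simp
      ultimately have "openin (top_of_set D) {q \<in> P. F q \<in> V}"
        by (rule openin_trans[rotated])
      moreover have "p \<in> P"
        using p \<open>d > 0\<close> by (simp add: P_def D_def mem_Times_iff)
      ultimately show ?thesis
        using V by (intro exI[of _ "{q \<in> P. F q \<in> V}"]) auto
    qed
  qed
  then have "continuous_map (top_of_set D) T F"
    by (simp add: continuous_map_atin)
  then show ?thesis
    by (simp add: D_def F_def)
qed

lemma path_outside_open_in_Yup:
  fixes g :: "'a::metric_space \<Rightarrow> real \<times> real"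
  assumes g: "continuous_map (top_of_set S) T g" and S: "compact S" and V: "openin T V" "0 \<in> V"
  obtains n where "\<And>t. t \<in> S \<Longrightarrow> g t \<notin> V \<Longrightarrow> g t \<in> Yup n"
proof (rule ccontr)
  assume "\<not> thesis"
  then have "\<forall>n. \<exists>t. t \<in> S \<and> g t \<notin> V \<and> g t \<notin> Yup n"
    using that by blast
  from choice[OF this] obtain tt where tt: "\<And>n. tt n \<in> S" "\<And>n. g (tt n) \<notin> V" "\<And>n. g (tt n) \<notin> Yup n"
    by blast
  define C where "C = {t \<in> S. g t \<notin> V}"
  have "closedin (top_of_set S) (S - {t \<in> S. g t \<in> V})"
    using openin_continuous_map_preimage[OF g V(1)] by (intro closedin_diff) auto
  moreover have "S - {t \<in> S. g t \<in> V} = C"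
    by (auto simp: C_def)
  ultimately have "compact C"
    using S closedin_compact by metis
  then obtain t r where t: "t \<in> C" and r: "strict_mono r" "(tt \<circ> r) \<longlonglongrightarrow> t"
    using tt(1,2) compact_imp_seq_compact[of C] unfolding seq_compact_def C_def by blast
  then have "limitin (top_of_set S) (tt \<circ> r) t sequentially"
    using tt(1) by (simp add: limitin_subtopology C_def)
  then have "limitin T (g \<circ> (tt \<circ> r)) (g t) sequentially"
    by (rule continuous_map_limit[OF g])
  moreover have "g (tt j) \<in> HA" for j
    using continuous_map_image_subset_topspace[OF g] tt(1) by auto
  moreover have "\<exists>j\<ge>j0. (g \<circ> (tt \<circ> r)) j \<notin> Yup n" for n j0
  proof (intro exI conjI)
    have "n \<le> r (max j0 n)"
      using seq_suble[OF r(1), of "max j0 n"] by simp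
    then show "(g \<circ> (tt \<circ> r)) (max j0 n) \<notin> Yup n"
      using tt(3)[of "r (max j0 n)"] Yup_mono by auto
  qed simp
  ultimately have "g t = 0"
    by (intro limit_of_escaping_sequence_is_origin) auto
  then show False
    using t V(2) by (simp add: C_def)
qed

lemma push_out_path_into_open:
  fixes g :: "'a::metric_space \<Rightarrow> real \<times> real"
  assumes g: "continuous_map (top_of_set S) T g" and S: "compact S" and V: "openin T V" "0 \<in> V"
  obtains M where "M \<ge> 1" "\<And>t. t \<in> S \<Longrightarrow> push_out M 1 (g t) \<in> V"
proof -
  obtain n where n: "\<And>t. t \<in> S \<Longrightarrow> g t \<notin> V \<Longrightarrow> g t \<in> Yup n"
    using path_outside_open_in_Yup[OF assms] by blast
  obtain M0 where M0: "\<And>m. m \<ge> M0 \<Longrightarrow> Xc m \<subseteq> V"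
    using Xc_eventually_in_open[OF V] by blast
  \<comment> \<open>a point outside \<open>V\<close> lies in \<open>Y\<^sup>n\<close>, so it is pushed onto \<open>Xc M\<close> or already lies on a
    circle \<open>Xc m\<close> with \<open>m \<ge> M\<close>\<close>
  define M where "M = max M0 (n + 1)"
  have "push_out M 1 (g t) \<in> V" if t: "t \<in> S" for t
  proof (cases "g t = 0 \<or> real M \<le> level (g t)")
    case True
    show ?thesis
    proof (rule ccontr)
      assume "push_out M 1 (g t) \<notin> V"
      then have "g t \<notin> V"
        using True push_out_fixed by auto
      moreover have "real n + 1 \<le> real M"
        by (simp add: M_def)
      ultimately obtain m where "level (g t) = real m" "g t \<in> Xc m"
        using mem_Xc_beyond_annuli[OF n[OF t]] True V(2) by (metis order.trans)
      moreover have "M0 \<le> m"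
        using True V(2) \<open>g t \<notin> V\<close> calculation(1) by (auto simp: M_def)
      ultimately show False
        using M0[of m] \<open>g t \<notin> V\<close> by auto
    qed
  next
    case False
    moreover have "g t \<in> HA"
      using continuous_map_image_subset_topspace[OF g] t by auto
    ultimately have "push_out M 1 (g t) \<in> Xc M"
      by (intro push_out_onto_Xc) (auto simp: mem_HA_iff M_def)
    then show ?thesis
      using M0[of M] by (auto simp: M_def)
  qed
  then show ?thesis
    using that[of M] by (simp add: M_def)
qed

lemma loops_nonempty: "loops T \<noteq> {}"
proof -
  have "restrict (\<lambda>t. 0) {0..1} \<in> loops T"
    using origin_in_HA by (intro restrict_in_loops) auto
  then show ?thesis
    by blast
qed

lemma path_component_meets_open:
  assumes A: "openin (compact_open_loops T) A" and f: "f \<in> A" and g: "g \<in> loops T"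
  shows "\<exists>h\<in>A. path_component_of (compact_open_loops T) g h"
proof -
  obtain V e0 where V: "openin T V" "0 \<in> V" "0 < e0"
    and absorb: "\<And>e l. 0 < e \<Longrightarrow> e < e0 \<Longrightarrow> l \<in> loops T \<Longrightarrow> l ` {0..1} \<subseteq> V \<Longrightarrow> join_at e l f \<in> A"
    using absorbs_short_prefixesD[OF absorbs_short_prefixes_if_open[OF A] f] by metis
  have f_loop: "f \<in> loops T"
    using openin_subset[OF A] f by auto
  define e where "e = min (e0 / 2) (1 / 2)"
  have e: "0 < e" "e < 1" "e < e0"
    using V(3) by (auto simp: e_def)
  define \<gamma> where "\<gamma> = join_at (1/2) g (restrict (reversepath f) {0..1})"
  have \<gamma>: "\<gamma> \<in> loops T"
    unfolding \<gamma>_def by (intro join_at_in_loops g reversepath_in_loops f_loop) auto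
  obtain M where M: "M \<ge> 1" "\<And>t. t \<in> {0..1} \<Longrightarrow> push_out M 1 (\<gamma> t) \<in> V"
    using push_out_path_into_open[OF loopsD(1)[OF \<gamma>] compact_Icc V(1,2)] by metis
  have H: "continuous_map (top_of_set ({0..1} \<times> {0..1})) T (\<lambda>p. push_out M (fst p) (\<gamma> (snd p)))"
    by (rule continuous_map_push_out_path[OF loopsD(1)[OF \<gamma>] M(1)])
  define l where "l = restrict (\<lambda>t. push_out M 1 (\<gamma> t)) {0..1}"
  have l: "l \<in> loops T"
    unfolding l_def using loopsD(2,3)[OF \<gamma>]
    by (intro restrict_in_loops continuous_map_compose_continuous_on[OF H, of _ "\<lambda>t. (1, t)", simplified])
      (auto intro!: continuous_intros)
  have "path_component_of (compact_open_loops T) g (join_at e \<gamma> f)"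
    unfolding \<gamma>_def by (rule path_component_of_join_at_cancel[OF g f_loop e(1,2)])
  moreover have "path_component_of (compact_open_loops T) (join_at e \<gamma> f) (join_at e l f)"
    using path_component_of_join_at_homotopy[OF H _ _ f_loop e(1,2)] loopsD(2,3)[OF \<gamma>] e(1)
    by (simp add: l_def join_at_restrict)
  ultimately have "path_component_of (compact_open_loops T) g (join_at e l f)"
    by (rule path_component_of_trans)
  moreover have "join_at e l f \<in> A"
  proof (rule absorb[OF e(1,3) l])
    show "l ` {0..1} \<subseteq> V"
      using M(2) by (auto simp: l_def)
  qed
  ultimately show ?thesis
    by blast
qed

end

theorem corollary10:
  assumes "HA_topology T"
  shows "{U. openin (pi1_top T) U \<and> U \<noteq> {}} = {topspace (pi1_top T)}"
proof -
  interpret harmonic_archipelago T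
    by (rule harmonic_archipelago.intro) (fact assms)
  show ?thesis
    unfolding pi1_top_def
    by (rule quotient_path_components_indiscrete) (use loops_nonempty path_component_meets_open in auto)
qed

end
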